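(* Let $N\ge 2$ be an integer and consider the graph $G_N$ and the clustering coefficient $C(p)$ defined below. Let $p_j$ denote the $j$-th prime and $\pi(x)$ the number of primes $\le x$. Let $p\le N$ be a prime having at least one neighbour in $G_N$ other than itself. If $p\ge\sqrt N$, then $C(p)=1$. If $p\le \sqrt N$, then $$C(p)=\frac{\left[\pi(p)-1\right]\left[2\left(\pi\left(\frac{N}{p}\right)-1\right)-\pi(p)\right]+2\left[\sum_{j=\pi(p)+1}^{\pi(\sqrt N)}\left(\pi\left(\frac{N}{p_j}\right)-j\right)+\pi(\sqrt N)-1\right]}{\pi\left(\frac{N}{p}\right)\left[\pi\left(\frac{N}{p}\right)-1\right]}.$$
   Context: The graph $G_N$ has vertex set the primes $q\le N$; two distinct primes $q,q'\le N$ are adjacent iff $qq'\le N$ (i.e. some composite $\le N$ is divisible by both), and a prime $q$ carries a self-loop iff $q^2\le N$. For a prime $p\le N$, let $V(p)$ be the set of primes $q\ne p$ adjacent to $p$ and $k=|V(p)|\ge 1$. Let $L(p)$ be the number of unordered pairs of distinct elements of $V(p)$ that are adjacent, plus the number of elements of $V(p)$ carrying a self-loop. The clustering coefficient is $C(p)=L(p)\big/\tfrac{1}{2}k(k+1)$ (the maximum possible number of such links, self-loops allowed). *)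

theory Defs
  imports "HOL-Computational_Algebra.Primes" "HOL-Library.Infinite_Set" Complex_Main
begin

definition primes_pi :: "real \<Rightarrow> nat" where
  "primes_pi x = card {q :: nat. prime q \<and> real q \<le> x}"

text \<open>The j-th prime (1-indexed): nth_prime 1 = 2, nth_prime 2 = 3, ...\<close>
definition nth_prime :: "nat \<Rightarrow> nat" where
  "nth_prime j = enumerate {q :: nat. prime q} (j - 1)"

definition GN_vertices :: "nat \<Rightarrow> nat set" where
  "GN_vertices N = {q. prime q \<and> q \<le> N}"

definition GN_adj :: "nat \<Rightarrow> nat \<Rightarrow> nat \<Rightarrow> bool" where
  "GN_adj N q q' \<longleftrightarrow> q \<in> GN_vertices N \<and> q' \<in> GN_vertices N \<and> q \<noteq> q' \<and> q * q' \<le> N"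

definition GN_loop :: "nat \<Rightarrow> nat \<Rightarrow> bool" where
  "GN_loop N q \<longleftrightarrow> q \<in> GN_vertices N \<and> q * q \<le> N"

definition nbhd :: "nat \<Rightarrow> nat \<Rightarrow> nat set" where
  "nbhd N p = {q. q \<noteq> p \<and> GN_adj N p q}"

definition links :: "nat \<Rightarrow> nat \<Rightarrow> nat" where
  "links N p = card {{q, q'} | q q'. q \<in> nbhd N p \<and> q' \<in> nbhd N p \<and> q \<noteq> q' \<and> GN_adj N q q'}
             + card {q \<in> nbhd N p. GN_loop N q}"

definition clustering :: "nat \<Rightarrow> nat \<Rightarrow> real" where
  "clustering N p = real (links N p) / (real (card (nbhd N p)) * (real (card (nbhd N p)) + 1) / 2)"

end

theory Submission
  imports Defs
begin

text \<open>
  If \<open>p \<ge> \<surd>N\<close>, every neighbour is at most \<open>p\<close>, so any two neighbours, and every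
  neighbour with itself, are adjacent: all \<open>k(k+1)/2\<close> possible links are present.
  If \<open>p \<le> \<surd>N\<close>, an adjacent pair \<open>q < q'\<close> of neighbours falls into exactly one of three
  classes: both below \<open>p\<close> (always adjacent); \<open>q\<close> below and \<open>q'\<close> above \<open>p\<close> (always adjacent);
  or \<open>q\<close> above \<open>p\<close>, which forces \<open>q \<le> \<surd>N\<close> and leaves \<open>\<pi>(N/q) - \<pi>(q)\<close> choices
  for \<open>q'\<close>. The self-loops are the primes up to \<open>\<surd>N\<close> other than \<open>p\<close>. Counting each
  class with \<open>\<pi>\<close> and re-indexing the last one by \<open>q = p\<^sub>j\<close> gives the formula.
\<close>

lemma mult_le_imp_le:
  fixes q k N :: nat
  assumes "0 < k" "q * k \<le> N"
  shows "q \<le> N"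
proof -
  have "q \<le> q * k" using mult_le_mono2[of 1 k q] assms(1) by simp
  then show ?thesis using assms(2) by (rule le_trans)
qed

lemma finite_mult_le: "0 < k \<Longrightarrow> finite {q::nat. q * k \<le> N}"
  by (rule finite_subset[of _ "{..N}"]) (auto dest: mult_le_imp_le)

lemma finite_of_nat_le: "finite {q::nat. real q \<le> x}"
  by (rule finite_subset[of _ "{..nat \<lceil>x\<rceil>}"]) (auto simp: le_nat_iff le_ceiling_iff)

lemma of_nat_le_sqrt_iff: "real q \<le> sqrt (real N) \<longleftrightarrow> q * q \<le> N"
proof -
  have "real q = sqrt (real (q * q))" by simp
  then show ?thesis by (simp only: real_sqrt_le_iff of_nat_le_iff)
qed

lemma sqrt_le_of_nat_iff: "sqrt (real N) \<le> real p \<longleftrightarrow> N \<le> p * p"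
proof -
  have "real p = sqrt (real (p * p))" by simp
  then show ?thesis by (simp only: real_sqrt_le_iff of_nat_le_iff)
qed

lemma of_nat_card_Diff_singleton:
  assumes "finite A" "x \<in> A"
  shows "of_nat (card (A - {x})) = of_nat (card A) - (1 :: 'a :: ring_1)"
  using card_Suc_Diff1[OF assms] by (metis add_diff_cancel_left' of_nat_Suc)

lemma card_ordered_pairs:
  fixes A :: "'a::linorder set"
  assumes "finite A"
  shows "2 * card {(x, y). x \<in> A \<and> y \<in> A \<and> x < y} + card A = card A * card A"
proof -
  let ?L = "{(x, y). x \<in> A \<and> y \<in> A \<and> x < y}"
  let ?U = "{(x, y). x \<in> A \<and> y \<in> A \<and> y < x}"
  let ?D = "(\<lambda>x. (x, x)) ` A"
  have product_split: "A \<times> A = ?L \<union> ?U \<union> ?D" by auto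
  have fin: "finite ?L" "finite ?U"
    by (rule finite_subset[of _ "A \<times> A"]; use assms in auto)+
  have "?U = prod.swap ` ?L" by auto
  then have "card ?U = card ?L" by (simp add: card_image)
  moreover have "card ?D = card A" by (simp add: card_image inj_on_def)
  moreover have "card (A \<times> A) = card ?L + card ?U + card ?D"
    unfolding product_split using fin assms by (subst card_Un_disjoint; auto)+
  ultimately show ?thesis by (simp add: card_cartesian_product)
qed

section \<open>Prime counting and the n-th prime\<close>

lemma primes_pi_of_nat: "primes_pi (real n) = card {q. prime q \<and> q \<le> n}"
  by (simp add: primes_pi_def)

lemma primes_pi_divide:
  "0 < k \<Longrightarrow> primes_pi (real N / real k) = card {q. prime q \<and> q * k \<le> N}"
proof -
  assume "0 < k"
  then have "real q \<le> real N / real k \<longleftrightarrow> q * k \<le> N" for q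
    by (simp add: pos_le_divide_eq flip: of_nat_mult)
  then show ?thesis by (simp add: primes_pi_def)
qed

lemma primes_pi_sqrt: "primes_pi (sqrt (real N)) = card {q. prime q \<and> q * q \<le> N}"
  by (simp add: primes_pi_def of_nat_le_sqrt_iff)

lemma primes_pi_mono: "x \<le> y \<Longrightarrow> primes_pi x \<le> primes_pi y"
  unfolding primes_pi_def
  by (rule card_mono) (auto simp: finite_of_nat_le)

lemma card_primes_less: "prime p \<Longrightarrow> real (card {q. prime q \<and> q < p}) = real (primes_pi (real p)) - 1"
proof -
  assume "prime p"
  have "{q. prime q \<and> q < p} = {q. prime q \<and> q \<le> p} - {p}" by auto
  also have "real (card \<dots>) = real (card {q. prime q \<and> q \<le> p}) - 1"
    using \<open>prime p\<close> by (intro of_nat_card_Diff_singleton) auto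
  finally show ?thesis by (simp add: primes_pi_of_nat)
qed

lemma enumerate_le_eq_image:
  fixes S :: "nat set"
  assumes "infinite S"
  shows "{s \<in> S. s \<le> enumerate S n} = enumerate S ` {..n}"
proof
  show "{s \<in> S. s \<le> enumerate S n} \<subseteq> enumerate S ` {..n}"
  proof
    fix s assume s: "s \<in> {s \<in> S. s \<le> enumerate S n}"
    then obtain i where i: "s = enumerate S i" using range_enumerate[OF assms] by blast
    then have "i \<le> n" using s enumerate_mono_le_iff[OF assms] by simp
    then show "s \<in> enumerate S ` {..n}" using i by blast
  qed
  show "enumerate S ` {..n} \<subseteq> {s \<in> S. s \<le> enumerate S n}"
    using enumerate_in_set[OF assms] enumerate_mono_le_iff[OF assms] by auto
qed

lemma card_enumerate_le:
  fixes S :: "nat set"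
  assumes "infinite S"
  shows "card {s \<in> S. s \<le> enumerate S n} = Suc n"
proof -
  have "inj_on (enumerate S) {..n}"
    using strict_mono_enumerate[OF assms] by (rule strict_mono_imp_inj_on)
  then show ?thesis unfolding enumerate_le_eq_image[OF assms] by (simp add: card_image)
qed

lemma prime_nth_prime: "prime (nth_prime j)"
  unfolding nth_prime_def using enumerate_in_set[OF primes_infinite] by simp

lemma primes_pi_nth_prime: "1 \<le> j \<Longrightarrow> primes_pi (real (nth_prime j)) = j"
  using card_enumerate_le[OF primes_infinite, of "j - 1"]
  by (simp add: primes_pi_def nth_prime_def)

lemma nth_prime_primes_pi: "prime q \<Longrightarrow> nth_prime (primes_pi (real q)) = q"
proof -
  assume "prime q"
  then obtain i where i: "enumerate {q. prime q} i = q"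
    using range_enumerate[OF primes_infinite] by (metis mem_Collect_eq rangeE)
  then have "primes_pi (real q) = Suc i"
    using card_enumerate_le[OF primes_infinite, of i] by (simp add: primes_pi_def)
  then show ?thesis using i by (simp add: nth_prime_def)
qed

lemma primes_pi_ge_1: "prime q \<Longrightarrow> 1 \<le> primes_pi (real q)"
  unfolding primes_pi_def using finite_of_nat_le[of "real q"]
  by (simp add: Suc_le_eq card_gt_0_iff) blast

lemma nth_prime_le_iff: "1 \<le> j \<Longrightarrow> real (nth_prime j) \<le> x \<longleftrightarrow> j \<le> primes_pi x"
proof
  assume "1 \<le> j" "real (nth_prime j) \<le> x"
  then show "j \<le> primes_pi x" using primes_pi_mono primes_pi_nth_prime by metis
next
  assume j: "1 \<le> j" "j \<le> primes_pi x"
  show "real (nth_prime j) \<le> x"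
  proof (rule ccontr)
    let ?P = "{q. prime q \<and> real q \<le> real (nth_prime j)}"
    assume "\<not> real (nth_prime j) \<le> x"
    then have "{q. prime q \<and> real q \<le> x} \<subseteq> ?P - {nth_prime j}"
      by auto
    then have "primes_pi x \<le> card (?P - {nth_prime j})"
      unfolding primes_pi_def by (rule card_mono[rotated]) (simp add: finite_of_nat_le)
    also have "\<dots> = j - 1"
      using j primes_pi_nth_prime[of j] prime_nth_prime[of j]
      by (simp add: card_Diff_singleton finite_of_nat_le primes_pi_def)
    finally show False using j by simp
  qed
qed

lemma nth_prime_image:
  "nth_prime ` {primes_pi (real p) + 1 .. primes_pi x} = {q. prime q \<and> p < q \<and> real q \<le> x}"
proof -
  have "q \<in> nth_prime ` {primes_pi (real p) + 1 .. primes_pi x}"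
    if "prime q" "p < q" "real q \<le> x" for q
  proof -
    have j: "1 \<le> primes_pi (real q)" using that(1) by (rule primes_pi_ge_1)
    then show ?thesis
      using that nth_prime_le_iff[OF j] nth_prime_le_iff[OF j, of "real p"] nth_prime_primes_pi[OF that(1)]
      by (intro image_eqI[of _ _ "primes_pi (real q)"]) auto
  qed
  moreover have "p < nth_prime j \<and> real (nth_prime j) \<le> x"
    if "primes_pi (real p) + 1 \<le> j" "j \<le> primes_pi x" for j
  proof -
    have j: "1 \<le> j" using that(1) by simp
    show ?thesis
      using that nth_prime_le_iff[OF j, of x] nth_prime_le_iff[OF j, of "real p"] by simp
  qed
  ultimately show ?thesis by (auto simp: prime_nth_prime)
qed

lemma inj_on_nth_prime: "inj_on nth_prime {1..}"
  by (rule inj_on_inverseI[of _ "\<lambda>q. primes_pi (real q)"]) (simp add: primes_pi_nth_prime)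

section \<open>Neighbourhoods and links\<close>

lemma nbhd_eq:
  assumes "prime p"
  shows "nbhd N p = {q. prime q \<and> q * p \<le> N} - {p}"
proof -
  have "q \<le> N \<and> p \<le> N" if "prime q" "q * p \<le> N" for q
    using that assms mult_le_imp_le[of p q N] mult_le_imp_le[of q p N]
    by (simp add: prime_gt_0_nat mult.commute)
  then show ?thesis
    using assms unfolding nbhd_def GN_adj_def GN_vertices_def by (auto simp: mult.commute)
qed

lemma finite_nbhd: "finite (nbhd N p)"
  by (rule finite_subset[of _ "{..N}"]) (auto simp: nbhd_def GN_adj_def GN_vertices_def)

definition adjacent_pairs :: "nat \<Rightarrow> nat set \<Rightarrow> (nat \<times> nat) set" where
  "adjacent_pairs N V = {(q, q'). q \<in> V \<and> q' \<in> V \<and> q < q' \<and> q * q' \<le> N}"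

lemma links_eq:
  "links N p = card (adjacent_pairs N (nbhd N p)) + card {q \<in> nbhd N p. q * q \<le> N}"
proof -
  let ?V = "nbhd N p"
  let ?E = "{{q, q'} | q q'. q \<in> ?V \<and> q' \<in> ?V \<and> q \<noteq> q' \<and> GN_adj N q q'}"
  have vertex: "q \<in> GN_vertices N" if "q \<in> ?V" for q
    using that unfolding nbhd_def GN_adj_def by auto
  have "?E = (\<lambda>(q, q'). {q, q'}) ` adjacent_pairs N ?V"
  proof (intro equalityI subsetI)
    fix e assume "e \<in> ?E"
    then obtain q q' where e: "e = {q, q'}" "q \<in> ?V" "q' \<in> ?V" "q \<noteq> q'" "q * q' \<le> N"
      unfolding GN_adj_def by auto
    then have "(min q q', max q q') \<in> adjacent_pairs N ?V"
      by (auto simp: adjacent_pairs_def min_def max_def mult.commute)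
    moreover have "e = {min q q', max q q'}" using e(1) by (auto simp: min_def max_def)
    ultimately show "e \<in> (\<lambda>(q, q'). {q, q'}) ` adjacent_pairs N ?V" by force
  next
    fix e assume "e \<in> (\<lambda>(q, q'). {q, q'}) ` adjacent_pairs N ?V"
    then show "e \<in> ?E"
      using vertex by (fastforce simp: adjacent_pairs_def GN_adj_def)
  qed
  moreover have "inj_on (\<lambda>(q, q'). {q, q'}) (adjacent_pairs N ?V)"
    by (auto simp: inj_on_def doubleton_eq_iff adjacent_pairs_def)
  moreover have "{q \<in> ?V. GN_loop N q} = {q \<in> ?V. q * q \<le> N}"
    using vertex unfolding GN_loop_def by auto
  ultimately show ?thesis unfolding links_def by (simp add: card_image)
qed

lemma links_nbhd_clique:
  assumes "\<And>q q'. q \<in> nbhd N p \<Longrightarrow> q' \<in> nbhd N p \<Longrightarrow> q * q' \<le> N"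
  shows "2 * links N p = card (nbhd N p) * (card (nbhd N p) + 1)"
proof -
  let ?V = "nbhd N p"
  have "adjacent_pairs N ?V = {(q, q'). q \<in> ?V \<and> q' \<in> ?V \<and> q < q'}"
    using assms by (auto simp: adjacent_pairs_def)
  moreover have "{q \<in> ?V. q * q \<le> N} = ?V" using assms by auto
  ultimately show ?thesis
    using card_ordered_pairs[OF finite_nbhd, of N p] by (simp add: links_eq algebra_simps)
qed

lemma clustering_eq_1_above_sqrt:
  assumes "prime p" "N \<le> p * p" "1 \<le> card (nbhd N p)"
  shows "clustering N p = 1"
proof -
  have "q * q' \<le> N" if "q \<in> nbhd N p" "q' \<in> nbhd N p" for q q'
  proof -
    have "q * p \<le> N" "q' * p \<le> N" using that nbhd_eq[OF assms(1)] by auto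
    have "q * p \<le> p * p" using \<open>q * p \<le> N\<close> assms(2) by (rule le_trans)
    then have "q \<le> p" using prime_gt_0_nat[OF assms(1)] by simp
    then have "q * q' \<le> q' * p" by (simp add: mult.commute)
    then show ?thesis using \<open>q' * p \<le> N\<close> by (rule le_trans)
  qed
  then have "2 * real (links N p) = real (card (nbhd N p)) * (real (card (nbhd N p)) + 1)"
    using links_nbhd_clique[of N p] by (metis of_nat_1 of_nat_add of_nat_mult of_nat_numeral)
  then show ?thesis using assms(3) by (simp add: clustering_def)
qed

section \<open>Counting links below the square root\<close>

lemma card_nbhd:
  assumes "prime p" "p * p \<le> N"
  shows "real (card (nbhd N p)) = real (primes_pi (real N / real p)) - 1"
proof -
  have "real (card (nbhd N p)) = real (card {q. prime q \<and> q * p \<le> N}) - 1"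
    unfolding nbhd_eq[OF assms(1)]
    using finite_mult_le[OF prime_gt_0_nat[OF assms(1)], of N] assms
    by (intro of_nat_card_Diff_singleton) auto
  then show ?thesis by (simp add: primes_pi_divide prime_gt_0_nat[OF assms(1)])
qed

lemma card_loops_nbhd:
  assumes "prime p" "p * p \<le> N"
  shows "real (card {q \<in> nbhd N p. q * q \<le> N}) = real (primes_pi (sqrt (real N))) - 1"
proof -
  have "q * p \<le> N" if "q * q \<le> N" for q
  proof (cases "q \<le> p")
    case True
    then have "q * p \<le> p * p" by simp
    then show ?thesis using assms(2) by (rule le_trans)
  next
    case False
    then have "q * p \<le> q * q" by simp
    then show ?thesis using that by (rule le_trans)
  qed
  then have "{q \<in> nbhd N p. q * q \<le> N} = {q. prime q \<and> q * q \<le> N} - {p}"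
    using nbhd_eq[OF assms(1)] by auto
  moreover have "finite {q. prime q \<and> q * q \<le> N}"
    using finite_of_nat_le[of "sqrt (real N)"] by (simp add: of_nat_le_sqrt_iff)
  ultimately show ?thesis
    using assms by (simp add: primes_pi_sqrt of_nat_card_Diff_singleton del: card_Diff_insert)
qed

definition upper_neighbours :: "nat \<Rightarrow> nat \<Rightarrow> nat set" where
  "upper_neighbours N q = {q'. prime q' \<and> q < q' \<and> q * q' \<le> N}"

lemma finite_upper_neighbours: "0 < q \<Longrightarrow> finite (upper_neighbours N q)"
  using finite_mult_le[of q N]
  by (rule finite_subset[rotated]) (auto simp: upper_neighbours_def mult.commute)

lemma card_upper_neighbours:
  assumes "0 < q" "q * q \<le> N"
  shows "real (card (upper_neighbours N q))
    = real (primes_pi (real N / real q)) - real (primes_pi (real q))"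
proof -
  let ?M = "{q'. prime q' \<and> q' * q \<le> N}" and ?L = "{q'. prime q' \<and> q' \<le> q}"
  have "q' * q \<le> N" if "q' \<le> q" for q'
    using mult_le_mono1[OF that, of q] assms(2) by (rule le_trans)
  then have "?L \<subseteq> ?M" by auto
  moreover have "finite ?M" using finite_mult_le[OF assms(1), of N] by simp
  moreover have "upper_neighbours N q = ?M - ?L"
    by (auto simp: upper_neighbours_def mult.commute)
  ultimately show ?thesis
    by (simp add: primes_pi_divide[OF assms(1)] primes_pi_of_nat card_Diff_subset of_nat_diff card_mono)
qed

lemma sum_card_upper_neighbours:
  "(\<Sum>q | prime q \<and> p < q \<and> q * q \<le> N. real (card (upper_neighbours N q)))
    = (\<Sum>j = primes_pi (real p) + 1 .. primes_pi (sqrt (real N)).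
         real (primes_pi (real N / real (nth_prime j))) - real j)"
proof -
  let ?J = "{primes_pi (real p) + 1 .. primes_pi (sqrt (real N))}"
  have "{q. prime q \<and> p < q \<and> q * q \<le> N} = nth_prime ` ?J"
    by (simp only: nth_prime_image of_nat_le_sqrt_iff)
  moreover have "inj_on nth_prime ?J" by (rule inj_on_subset[OF inj_on_nth_prime]) auto
  moreover have "real (card (upper_neighbours N (nth_prime j)))
      = real (primes_pi (real N / real (nth_prime j))) - real j" if "j \<in> ?J" for j
  proof -
    have "1 \<le> j" "j \<le> primes_pi (sqrt (real N))" using that by auto
    then have "nth_prime j * nth_prime j \<le> N"
      using nth_prime_le_iff of_nat_le_sqrt_iff by blast
    then show ?thesis using \<open>1 \<le> j\<close>
      by (simp add: card_upper_neighbours prime_gt_0_nat prime_nth_prime primes_pi_nth_prime)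
  qed
  ultimately show ?thesis by (simp add: sum.reindex)
qed

lemma adjacent_pairs_nbhd_split:
  assumes "prime p" "p * p \<le> N"
  defines "A \<equiv> {q. prime q \<and> q < p}" and "Q \<equiv> {q. prime q \<and> p < q \<and> q * q \<le> N}"
  shows "adjacent_pairs N (nbhd N p) = {(q, q'). q \<in> A \<and> q' \<in> A \<and> q < q'}
    \<union> A \<times> upper_neighbours N p \<union> Sigma Q (upper_neighbours N)"
proof -
  have upper_p: "upper_neighbours N p = {q. prime q \<and> p < q \<and> q * p \<le> N}"
    by (auto simp: upper_neighbours_def mult.commute)
  have below_p: "x * p \<le> N" if "x < p" for x
    using mult_le_mono1[OF less_imp_le[OF that], of p] assms(2) by (rule le_trans)
  have below: "x * y \<le> N" if "x < p" "y < p" for x y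
    using mult_le_mono[OF less_imp_le[OF that(1)] less_imp_le[OF that(2)]] assms(2) by (rule le_trans)
  have below_across: "x * y \<le> N" if "x < p" "y * p \<le> N" for x y
  proof -
    have "x * y \<le> y * p" using mult_le_mono1[OF less_imp_le[OF that(1)], of y] by (simp only: mult.commute)
    then show ?thesis using that(2) by (rule le_trans)
  qed
  have square: "x * x \<le> N" if "x < y" "x * y \<le> N" for x y
    using mult_le_mono2[OF less_imp_le[OF that(1)], of x] that(2) by (rule le_trans)
  have above: "y * p \<le> N" if "p < x" "x * y \<le> N" for x y
  proof -
    have "y * p \<le> x * y" using mult_le_mono2[OF less_imp_le[OF that(1)], of y] by (simp only: mult.commute)
    then show ?thesis using that(2) by (rule le_trans)
  qed
  show ?thesis
    using assms(1,2)
    unfolding adjacent_pairs_def nbhd_eq[OF assms(1)] upper_p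
    unfolding upper_neighbours_def A_def Q_def
    by (auto simp: below_p below below_across square above)
qed

lemma card_adjacent_pairs_nbhd_split:
  assumes "prime p" "p * p \<le> N"
  defines "A \<equiv> {q. prime q \<and> q < p}" and "Q \<equiv> {q. prime q \<and> p < q \<and> q * q \<le> N}"
  shows "card (adjacent_pairs N (nbhd N p)) = card {(q, q'). q \<in> A \<and> q' \<in> A \<and> q < q'}
    + card A * card (upper_neighbours N p) + (\<Sum>q\<in>Q. card (upper_neighbours N q))"
proof -
  let ?P = "{(q, q'). q \<in> A \<and> q' \<in> A \<and> q < q'}"
  have fin_A: "finite A" by (simp add: A_def)
  have fin_P: "finite ?P" by (rule finite_subset[of _ "A \<times> A"]) (auto simp: fin_A)
  have fin_Q: "finite Q"
    using finite_of_nat_le[of "sqrt (real N)"]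
    by (rule finite_subset[rotated]) (auto simp: Q_def of_nat_le_sqrt_iff)
  have fin_upper: "finite (upper_neighbours N q)" if "q \<in> Q \<or> q = p" for q
    using that assms(1) by (auto simp: Q_def prime_gt_0_nat intro: finite_upper_neighbours)
  have "?P \<inter> A \<times> upper_neighbours N p = {}"
    "(?P \<union> A \<times> upper_neighbours N p) \<inter> Sigma Q (upper_neighbours N) = {}"
    by (auto simp: A_def Q_def upper_neighbours_def)
  then show ?thesis
    unfolding adjacent_pairs_nbhd_split[OF assms(1,2)] A_def[symmetric] Q_def[symmetric]
    using fin_A fin_P fin_Q fin_upper
    by (simp add: card_Un_disjoint card_cartesian_product)
qed

lemma card_adjacent_pairs_nbhd:
  assumes "prime p" "p * p \<le> N"
  shows "2 * real (card (adjacent_pairs N (nbhd N p)))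
    = (real (primes_pi (real p)) - 1) *
        (2 * (real (primes_pi (real N / real p)) - 1) - real (primes_pi (real p)))
      + 2 * (\<Sum>j = primes_pi (real p) + 1 .. primes_pi (sqrt (real N)).
               real (primes_pi (real N / real (nth_prime j))) - real j)"
proof -
  define A where "A = {q. prime q \<and> q < p}"
  define P where "P = {(q, q'). q \<in> A \<and> q' \<in> A \<and> q < q'}"
  define Q where "Q = {q. prime q \<and> p < q \<and> q * q \<le> N}"
  have "2 * card P + card A = card A * card A"
    unfolding P_def by (rule card_ordered_pairs) (simp add: A_def)
  then have "2 * real (card P) = real (card A) * (real (card A) - 1)"
    by (simp add: algebra_simps flip: of_nat_mult of_nat_add)
  moreover have "real (card (adjacent_pairs N (nbhd N p)))
      = real (card P) + real (card A) * real (card (upper_neighbours N p))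
        + (\<Sum>q\<in>Q. real (card (upper_neighbours N q)))"
    using card_adjacent_pairs_nbhd_split[OF assms] unfolding A_def P_def Q_def by simp
  moreover have "real (card A) = real (primes_pi (real p)) - 1"
    unfolding A_def using assms(1) by (rule card_primes_less)
  ultimately show ?thesis
    using card_upper_neighbours[OF prime_gt_0_nat[OF assms(1)] assms(2)]
      sum_card_upper_neighbours[where p = p and N = N]
    unfolding Q_def by (simp add: algebra_simps)
qed

lemma clustering_eq_below_sqrt:
  assumes "prime p" "p * p \<le> N"
  shows "clustering N p =
    ((real (primes_pi (real p)) - 1) *
       (2 * (real (primes_pi (real N / real p)) - 1) - real (primes_pi (real p)))
     + 2 * ((\<Sum>j = primes_pi (real p) + 1 .. primes_pi (sqrt (real N)).
               real (primes_pi (real N / real (nth_prime j))) - real j)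
            + real (primes_pi (sqrt (real N))) - 1))
    / (real (primes_pi (real N / real p)) * (real (primes_pi (real N / real p)) - 1))"
proof -
  let ?k = "real (card (nbhd N p))" and ?M = "real (primes_pi (real N / real p))"
  have "clustering N p = 2 * real (links N p) / (?k * (?k + 1))"
    by (simp add: clustering_def)
  also have "?k * (?k + 1) = ?M * (?M - 1)"
    using card_nbhd[OF assms] by simp
  finally show ?thesis
    using card_adjacent_pairs_nbhd[OF assms] card_loops_nbhd[OF assms]
    by (simp add: links_eq algebra_simps)
qed

theorem mainTheorem11:
  fixes N p :: nat
  assumes "N \<ge> 2" and "prime p" and "p \<le> N" and "card (nbhd N p) \<ge> 1"
  shows "(sqrt (real N) \<le> real p \<longrightarrow> clustering N p = 1) \<and>
         (real p \<le> sqrt (real N) \<longrightarrow>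
            clustering N p =
              ((real (primes_pi (real p)) - 1) *
                 (2 * (real (primes_pi (real N / real p)) - 1) - real (primes_pi (real p)))
               + 2 * ((\<Sum>j = primes_pi (real p) + 1 .. primes_pi (sqrt (real N)).
                         real (primes_pi (real N / real (nth_prime j))) - real j)
                      + real (primes_pi (sqrt (real N))) - 1))
              / (real (primes_pi (real N / real p)) * (real (primes_pi (real N / real p)) - 1)))"
  using clustering_eq_1_above_sqrt[OF assms(2) _ assms(4)] clustering_eq_below_sqrt[OF assms(2)]
  by (simp only: sqrt_le_of_nat_iff of_nat_le_sqrt_iff) blast

end
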